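(* For every $m\ge 1$, $$\mathscr{T}_m=\left\{\tau_1^{\epsilon_1}\circ\tau_2^{\epsilon_2}\circ\cdots\circ\tau_m^{\epsilon_m}\ \middle|\ \epsilon_1,\ldots,\epsilon_m\in\{1,2\}\right\}.$$ (Since $\tau_i^2$ is the identity, this is the set of all products $\tau_{i_1}\circ\cdots\circ\tau_{i_k}$ with $i_1<\cdots<i_k$, including the empty product.)
   Context: $\mathcal{S}_m$ is the group of bijections of $I_m=\{1,\ldots,m\}$, with $\sigma\circ\tau$ meaning apply $\tau$ first, then $\sigma$. $\mathscr{T}_m=\{\sigma\in\mathcal{S}_m \mid \exists t\in I_m:\ \sigma(1)>\sigma(2)>\cdots>\sigma(t)=1,\ \sigma(t)<\sigma(t+1)<\cdots<\sigma(m)\}$. For $i\in I_m$, $\tau_i\in\mathcal{S}_m$ is defined by $\tau_i(j)=i+1-j$ for $1\le j\le i$ and $\tau_i(j)=j$ for $j>i$. *)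

theory Defs
  imports "HOL-Combinatorics.Permutations"
begin

definition T_set :: "nat \<Rightarrow> (nat \<Rightarrow> nat) set" where
  "T_set m = {\<sigma>. \<sigma> permutes {1..m} \<and>
     (\<exists>t\<in>{1..m}. (\<forall>j. 1 \<le> j \<and> j < t \<longrightarrow> \<sigma> j > \<sigma> (j+1)) \<and> \<sigma> t = 1 \<and>
                    (\<forall>j. t \<le> j \<and> j < m \<longrightarrow> \<sigma> j < \<sigma> (j+1)))}"

definition tau :: "nat \<Rightarrow> nat \<Rightarrow> nat" where
  "tau i j = (if 1 \<le> j \<and> j \<le> i then i + 1 - j else j)"

fun tau_prod :: "nat \<Rightarrow> (nat \<Rightarrow> nat) \<Rightarrow> (nat \<Rightarrow> nat)" where
  "tau_prod 0 e = id"
| "tau_prod (Suc k) e = tau_prod k e \<circ> (tau (Suc k) ^^ e (Suc k))"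

end

theory Submission
  imports Defs
begin

text \<open>Composing on the right with \<open>\<tau>\<^sub>m\<close> reverses the one-line notation of \<open>\<sigma>\<close>, which maps
  V-shaped permutations of \<open>{1..m}\<close> to V-shaped ones. The largest value \<open>m\<close> of a V-shaped
  permutation sits at one of the two ends; after possibly reversing, it is the fixed point \<open>m\<close>,
  and dropping it leaves a V-shaped permutation of \<open>{1..m-1}\<close>. Induction on \<open>m\<close> then
  writes every element of \<open>\<T>\<^sub>m\<close> as \<open>\<rho> \<circ> \<tau>\<^sub>m\<^sup>\<epsilon>\<close> with \<open>\<rho> \<in> \<T>\<^sub>m\<^sub>-\<^sub>1\<close>, and conversely.\<close>

definition V_shaped_at :: "(nat \<Rightarrow> nat) \<Rightarrow> nat \<Rightarrow> nat \<Rightarrow> bool" where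
  "V_shaped_at \<sigma> m t \<longleftrightarrow> t \<in> {1..m} \<and> (\<forall>j. 1 \<le> j \<and> j < t \<longrightarrow> \<sigma> j > \<sigma> (j+1)) \<and> \<sigma> t = 1 \<and>
                          (\<forall>j. t \<le> j \<and> j < m \<longrightarrow> \<sigma> j < \<sigma> (j+1))"

lemma T_set_iff: "\<sigma> \<in> T_set m \<longleftrightarrow> \<sigma> permutes {1..m} \<and> (\<exists>t. V_shaped_at \<sigma> m t)"
  unfolding T_set_def V_shaped_at_def by auto

lemma tau_tau [simp]: "tau i (tau i x) = x"
  unfolding tau_def by auto

lemma tau_permutes: "tau i permutes {1..i}"
  unfolding permutes_def by (metis tau_def atLeastAtMost_iff tau_tau)

lemma tau_Suc_0: "tau (Suc 0) = id"
  unfolding tau_def by (auto simp: fun_eq_iff)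

lemma funpow_tau: "tau i ^^ k = (if even k then id else tau i)"
  by (induction k) (auto simp: fun_eq_iff)

lemma funpow_tau_involutive: "(tau i ^^ k) \<circ> (tau i ^^ k) = id"
  by (auto simp: funpow_tau fun_eq_iff)

lemma tau_prod_Suc_0: "tau_prod (Suc 0) e = id"
  by (simp add: tau_Suc_0)

lemma tau_prod_cong:
  "(\<And>i. 1 \<le> i \<Longrightarrow> i \<le> k \<Longrightarrow> e i = e' i) \<Longrightarrow> tau_prod k e = tau_prod k e'"
  by (induction k) simp_all

lemma tau_prod_Suc_upd: "tau_prod (Suc n) (e(Suc n := k)) = tau_prod n e \<circ> (tau (Suc n) ^^ k)"
  using tau_prod_cong[of n "e(Suc n := k)" e] by simp

lemma V_shaped_at_comp_tau:
  assumes "V_shaped_at \<sigma> m t"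
  shows "V_shaped_at (\<sigma> \<circ> tau m) m (m + 1 - t)"
proof -
  from assms have t: "1 \<le> t" "t \<le> m" and one: "\<sigma> t = 1"
    and dec: "\<And>j. 1 \<le> j \<Longrightarrow> j < t \<Longrightarrow> \<sigma> j > \<sigma> (j+1)"
    and inc: "\<And>j. t \<le> j \<Longrightarrow> j < m \<Longrightarrow> \<sigma> j < \<sigma> (j+1)"
    unfolding V_shaped_at_def by auto
  have tau_in: "tau m j = m + 1 - j" if "1 \<le> j" "j \<le> m" for j
    using that unfolding tau_def by auto
  have tau_Suc: "tau m (Suc j) = m - j" if "j < m" for j
    using that unfolding tau_def by auto
  show ?thesis unfolding V_shaped_at_def
  proof (intro conjI allI impI)
    fix j assume j: "1 \<le> j \<and> j < m + 1 - t"
    then have "\<sigma> (m - j) < \<sigma> (m - j + 1)" using inc[of "m - j"] t by auto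
    moreover have "j < m" using j t by auto
    ultimately show "(\<sigma> \<circ> tau m) j > (\<sigma> \<circ> tau m) (j+1)"
      using j by (simp add: tau_in tau_Suc Suc_diff_le)
  next
    fix j assume j: "m + 1 - t \<le> j \<and> j < m"
    then have "\<sigma> (m - j) > \<sigma> (m - j + 1)" using dec[of "m - j"] t by auto
    then show "(\<sigma> \<circ> tau m) j < (\<sigma> \<circ> tau m) (j+1)"
      using j t by (simp add: tau_in tau_Suc Suc_diff_le)
  qed (use t one in \<open>auto simp: tau_in\<close>)
qed

lemma T_set_comp_funpow_tau: "\<sigma> \<in> T_set m \<Longrightarrow> \<sigma> \<circ> (tau m ^^ k) \<in> T_set m"
  using V_shaped_at_comp_tau permutes_compose[OF tau_permutes]
  by (auto simp: funpow_tau T_set_iff)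

lemma T_set_Suc_0: "T_set (Suc 0) = {id}"
  unfolding T_set_def by (auto simp: permutes_sing)

lemma T_set_subset_Suc: "T_set n \<subseteq> T_set (Suc n)"
proof
  fix \<sigma> assume "\<sigma> \<in> T_set n"
  then obtain t where perm: "\<sigma> permutes {1..n}" and V: "V_shaped_at \<sigma> n t"
    by (auto simp: T_set_iff)
  have "V_shaped_at \<sigma> (Suc n) t"
    unfolding V_shaped_at_def
  proof (intro conjI allI impI)
    fix j assume j: "t \<le> j \<and> j < Suc n"
    show "\<sigma> j < \<sigma> (j + 1)"
    proof (cases "j < n")
      case True
      then show ?thesis using V j unfolding V_shaped_at_def by auto
    next
      case False
      then have "j = n" "n \<in> {1..n}" using j V unfolding V_shaped_at_def by auto
      moreover have "\<sigma> (Suc n) = Suc n" using perm by (auto simp: permutes_def)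
      ultimately show ?thesis using permutes_in_image[OF perm, of n] by auto
    qed
  qed (use V in \<open>auto simp: V_shaped_at_def\<close>)
  moreover have "\<sigma> permutes {1..Suc n}"
    using perm permutes_subset by fastforce
  ultimately show "\<sigma> \<in> T_set (Suc n)" by (auto simp: T_set_iff)
qed

lemma T_set_restrict:
  assumes "\<sigma> \<in> T_set (Suc n)" "n \<ge> 1" "\<sigma> (Suc n) = Suc n"
  shows "\<sigma> \<in> T_set n"
proof -
  from assms obtain t where perm: "\<sigma> permutes {1..Suc n}" and V: "V_shaped_at \<sigma> (Suc n) t"
    by (auto simp: T_set_iff)
  have "\<sigma> permutes {1..n}"
    by (rule permutes_superset[OF perm]) (use assms(3) in \<open>auto simp: le_Suc_eq\<close>)
  moreover have "t \<noteq> Suc n" using V assms(2,3) unfolding V_shaped_at_def by auto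
  then have "V_shaped_at \<sigma> n t" using V unfolding V_shaped_at_def by auto
  ultimately show ?thesis by (auto simp: T_set_iff)
qed

text \<open>An interior maximum would have a larger neighbour on the side away from the valley.\<close>

lemma T_set_max_at_end:
  assumes "\<sigma> \<in> T_set m"
  shows "\<sigma> m = m \<or> \<sigma> 1 = m"
proof -
  from assms obtain t where perm: "\<sigma> permutes {1..m}" and V: "V_shaped_at \<sigma> m t"
    by (auto simp: T_set_iff)
  have bounded: "\<sigma> i \<le> m" if "i \<in> {1..m}" for i
    using permutes_in_image[OF perm, of i] that by simp
  from V have "m \<ge> 1" unfolding V_shaped_at_def by auto
  then obtain j where j: "j \<in> {1..m}" "\<sigma> j = m"
    using permutes_image[OF perm] by (metis atLeastAtMost_iff imageE order_refl)
  have "\<not> (1 < j \<and> j < m)"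
  proof
    assume interior: "1 < j \<and> j < m"
    consider "j < t" | "j = t" | "t < j" by linarith
    then show False
    proof cases
      case 1
      then have "1 \<le> j - 1 \<and> j - 1 < t" using interior by auto
      then have "\<sigma> (j - 1) > \<sigma> (j - 1 + 1)" using V unfolding V_shaped_at_def by blast
      then have "\<sigma> (j - 1) > \<sigma> j" using interior by simp
      moreover have "j - 1 \<in> {1..m}" using interior by auto
      ultimately show False using bounded j by fastforce
    next
      case 2
      then show False using V interior j unfolding V_shaped_at_def by auto
    next
      case 3
      then have "\<sigma> j < \<sigma> (j + 1)" using V interior unfolding V_shaped_at_def by auto
      moreover have "j + 1 \<in> {1..m}" using interior by auto
      ultimately show False using bounded j by fastforce
    qed
  qed
  then show ?thesis using j by force
qed

lemma tau_prod_in_T_set: "m \<ge> 1 \<Longrightarrow> tau_prod m e \<in> T_set m"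
proof (induction m rule: nat_induct_at_least)
  case base
  show ?case by (metis One_nat_def T_set_Suc_0 tau_prod_Suc_0 singletonI)
next
  case (Suc n)
  then have "tau_prod n e \<in> T_set (Suc n)" using T_set_subset_Suc by blast
  then show ?case unfolding tau_prod.simps by (rule T_set_comp_funpow_tau)
qed

lemma T_set_imp_tau_prod:
  "m \<ge> 1 \<Longrightarrow> \<sigma> \<in> T_set m \<Longrightarrow> \<exists>e. \<sigma> = tau_prod m e \<and> (\<forall>i\<in>{1..m}. e i \<in> {1, 2})"
proof (induction m arbitrary: \<sigma> rule: nat_induct_at_least)
  case base
  then have "\<sigma> = id" by (simp add: T_set_Suc_0)
  then have "\<sigma> = tau_prod 1 (\<lambda>_. 1)" by (simp only: One_nat_def tau_prod_Suc_0)
  then show ?case by blast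
next
  case (Suc n)
  obtain k :: nat where k: "k \<in> {1, 2}" "(\<sigma> \<circ> (tau (Suc n) ^^ k)) (Suc n) = Suc n"
  proof (cases "\<sigma> (Suc n) = Suc n")
    case True
    then show ?thesis using that[of 2] by (simp add: funpow_tau)
  next
    case False
    then have "\<sigma> 1 = Suc n" using T_set_max_at_end[OF Suc.prems] by simp
    then show ?thesis using that[of 1] by (simp add: tau_def)
  qed
  let ?\<rho> = "\<sigma> \<circ> (tau (Suc n) ^^ k)"
  have "?\<rho> \<in> T_set n"
    using T_set_restrict T_set_comp_funpow_tau Suc.prems Suc.hyps k(2) by blast
  then obtain e where e: "?\<rho> = tau_prod n e" "\<forall>i\<in>{1..n}. e i \<in> {1, 2}"
    using Suc.IH by blast
  have "\<sigma> = ?\<rho> \<circ> (tau (Suc n) ^^ k)"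
    by (simp add: comp_assoc funpow_tau_involutive)
  also have "\<dots> = tau_prod (Suc n) (e(Suc n := k))"
    by (simp only: e(1) tau_prod_Suc_upd)
  finally have "\<sigma> = tau_prod (Suc n) (e(Suc n := k))" .
  moreover have "\<forall>i\<in>{1..Suc n}. (e(Suc n := k)) i \<in> {1, 2}"
    using e(2) k(1) by (auto simp: le_Suc_eq)
  ultimately show ?case by blast
qed

theorem mainTheorem7:
  fixes m :: nat
  assumes "m \<ge> 1"
  shows "T_set m = {tau_prod m e | e. \<forall>i\<in>{1..m}. e i \<in> {1, 2}}"
  using tau_prod_in_T_set[OF assms] T_set_imp_tau_prod[OF assms] by blast

end
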